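(* Let $m\le n$ be positive integers, $\gamma,\tau,\delta>0$ with $\eta=\sqrt{\tau+\gamma}<1/2$, and let $\mathbf{A}$ be a random variable valued in $\mathbb{F}_2^{m\times n}$ with $H_\infty(\mathbf{A})\ge(1-\gamma)mn$. Then $$\Pr[\mathbf{A}\text{ is }(\tau,\delta)\text{-bad}]\le m\cdot 2^{-\tau n}+m\cdot\delta\cdot 2^{h(\eta)m}.$$
   Context: $h$ is the binary entropy function, $H_\infty(X)=-\log_2\max_x\Pr[X=x]$. For a matrix $A$, $A_i$ is its $i$-th row, $A_{[i]}$ its first $i$ rows. $p_i(A)=\Pr[\mathbf{A}_i=A_i\mid\mathbf{A}_{[i-1]}=A_{[i-1]}]$, $q_i(A)=-\log_2p_i(A)$; $A$ is $\tau$-rare if $p_i(A)<2^{-n(1+\tau)}$ for some $i$. Fix a function $B$ on $\mathrm{supp}(\mathbf{A})$: if $A$ is $\tau$-rare then $B(A)=\bot$; otherwise $B(A)$ is a (fixed choice of) subset $S\subseteq[m]$ with $|S|\le\eta m$ and $q_i(A)\ge(1-\eta)n$ for all $i\notin S$ (such $S$ exists). $A\in\mathrm{supp}(\mathbf{A})$ is $(\tau,\delta)$-bad if $A$ is $\tau$-rare, or there is $i\in[m]$ with $\Pr[B(\mathbf{A})=B(A)\mid\mathbf{A}_{[i-1]}=A_{[i-1]}]<\delta$. *)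

theory Defs
  imports "HOL-Probability.Probability"
begin

text \<open>Matrices over F_2 of size m x n are functions A :: nat => nat => bool
  (A i j = entry in row i, column j, True = 1), 0-indexed, with all entries
  outside {..<m} x {..<n} equal to False.\<close>

type_synonym mat2 = "nat \<Rightarrow> nat \<Rightarrow> bool"

definition f2_mats :: "nat \<Rightarrow> nat \<Rightarrow> mat2 set" where
  "f2_mats m n = {A. \<forall>i j. (m \<le> i \<or> n \<le> j) \<longrightarrow> \<not> A i j}"

definition bin_entropy :: "real \<Rightarrow> real" where
  "bin_entropy x = - x * log 2 x - (1 - x) * log 2 (1 - x)"

definition min_entropy :: "'a pmf \<Rightarrow> real" where
  "min_entropy P = - log 2 (SUP x. pmf P x)"

definition prefix_event :: "mat2 \<Rightarrow> nat \<Rightarrow> mat2 set" where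
  "prefix_event A i = {X. \<forall>j<i. X j = A j}"

definition cond_prob :: "'a pmf \<Rightarrow> 'a set \<Rightarrow> 'a set \<Rightarrow> real" where
  "cond_prob P E F = measure_pmf.prob P (E \<inter> F) / measure_pmf.prob P F"

definition p_row :: "mat2 pmf \<Rightarrow> mat2 \<Rightarrow> nat \<Rightarrow> real" where
  "p_row P A i = cond_prob P {X. X i = A i} (prefix_event A i)"

definition q_row :: "mat2 pmf \<Rightarrow> mat2 \<Rightarrow> nat \<Rightarrow> real" where
  "q_row P A i = - log 2 (p_row P A i)"

definition rare :: "mat2 pmf \<Rightarrow> nat \<Rightarrow> nat \<Rightarrow> real \<Rightarrow> mat2 \<Rightarrow> bool" where
  "rare P m n \<tau> A \<longleftrightarrow> (\<exists>i<m. p_row P A i < 2 powr (- (real n * (1 + \<tau>))))"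

text \<open>Admissible choice of the function B (None plays the role of bottom).\<close>
definition valid_B :: "mat2 pmf \<Rightarrow> nat \<Rightarrow> nat \<Rightarrow> real \<Rightarrow> real \<Rightarrow>
    (mat2 \<Rightarrow> nat set option) \<Rightarrow> bool" where
  "valid_B P m n \<tau> \<eta> B \<longleftrightarrow>
     (\<forall>A \<in> set_pmf P.
        (rare P m n \<tau> A \<longrightarrow> B A = None) \<and>
        (\<not> rare P m n \<tau> A \<longrightarrow>
           (\<exists>S. B A = Some S \<and> S \<subseteq> {..<m} \<and> real (card S) \<le> \<eta> * real m \<and>
                (\<forall>i<m. i \<notin> S \<longrightarrow> q_row P A i \<ge> (1 - \<eta>) * real n))))"

definition bad :: "mat2 pmf \<Rightarrow> nat \<Rightarrow> nat \<Rightarrow> real \<Rightarrow> real \<Rightarrow>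
    (mat2 \<Rightarrow> nat set option) \<Rightarrow> mat2 \<Rightarrow> bool" where
  "bad P m n \<tau> \<delta> B A \<longleftrightarrow> rare P m n \<tau> A \<or>
     (\<exists>i<m. cond_prob P {X. B X = B A} (prefix_event A i) < \<delta>)"

end

theory Submission
  imports Defs
begin

text \<open>Both parts of the bound come from conditioning on the first \<open>i\<close> rows. Given the prefix,
  the next row takes at most \<open>2^n\<close> values, so the total conditional mass of the values of
  probability below \<open>t\<close> is at most \<open>2^n t\<close>; with \<open>t = 2^{-n(1+\<tau>)}\<close> and a union bound over
  the rows this bounds the probability of rarity. Likewise, for a fixed value \<open>b\<close> of \<open>B\<close>, the
  event \<open>B = b\<close> has conditional probability below \<open>\<delta>\<close> only on prefixes where its total
  conditional mass is below \<open>\<delta>\<close>; a union bound over the \<open>m\<close> rows and the at most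
  \<open>2^{h(\<eta>)m}\<close> admissible sets \<open>S\<close> finishes the proof.\<close>

lemma powr_neg_bin_entropy:
  fixes \<eta> x :: real
  assumes "0 < \<eta>" "\<eta> < 1"
  shows "2 powr (- (bin_entropy \<eta> * x)) = \<eta> powr (\<eta> * x) * (1 - \<eta>) powr ((1 - \<eta>) * x)"
proof -
  have "\<eta> powr (\<eta> * x) * (1 - \<eta>) powr ((1 - \<eta>) * x)
      = (2 powr log 2 \<eta>) powr (\<eta> * x) * (2 powr log 2 (1 - \<eta>)) powr ((1 - \<eta>) * x)"
    using assms by simp
  also have "\<dots> = 2 powr (- (bin_entropy \<eta> * x))"
    by (simp add: powr_powr powr_add[symmetric] bin_entropy_def algebra_simps)
  finally show ?thesis ..
qed

lemma powr_neg_bin_entropy_le: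
  fixes \<eta> :: real and k m :: nat
  assumes "0 < \<eta>" "\<eta> \<le> 1/2" "k \<le> m" "real k \<le> \<eta> * real m"
  shows "2 powr (- (bin_entropy \<eta> * real m)) \<le> \<eta> ^ k * (1 - \<eta>) ^ (m - k)"
proof -
  define r where "r = \<eta> / (1 - \<eta>)"
  have r: "0 < r" "r \<le> 1" using assms(1,2) by (auto simp: r_def field_simps)
  have "2 powr (- (bin_entropy \<eta> * real m)) = (1 - \<eta>) powr real m * r powr (\<eta> * real m)"
    using assms(1,2) by (simp add: powr_neg_bin_entropy r_def powr_divide powr_diff
        left_diff_distrib)
  also have "\<dots> \<le> (1 - \<eta>) powr real m * r powr real k"
    using assms(1,2,4) r by (intro mult_left_mono powr_mono') auto
  also have "\<dots> = \<eta> ^ k * (1 - \<eta>) ^ (m - k)"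
    using assms by (simp add: r_def powr_realpow powr_divide power_divide field_simps
        flip: power_add)
  finally show ?thesis .
qed

lemma sum_subsets_bernoulli_weights:
  fixes \<eta> :: real
  shows "(\<Sum>S\<in>Pow {..<m}. \<eta> ^ card S * (1 - \<eta>) ^ (m - card S)) = 1"
proof -
  have "(\<Sum>S\<in>Pow {..<m}. \<eta> ^ card S * (1 - \<eta>) ^ (m - card S))
      = (\<Sum>S\<in>Pow {..<m}. (\<Prod>_\<in>S. \<eta>) * (\<Prod>_\<in>{..<m} - S. 1 - \<eta>))"
    by (intro sum.cong) (auto simp: card_Diff_subset finite_subset)
  also have "\<dots> = (\<Prod>_\<in>{..<m}. \<eta> + (1 - \<eta>))"
    by (rule prod_add[symmetric]) simp
  finally show ?thesis by simp
qed

text \<open>Under the product Bernoulli(\<open>\<eta>\<close>) measure on subsets of \<open>{..<m}\<close>, whose weights sum to 1,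
  every subset of size at most \<open>\<eta> m\<close> has weight at least \<open>2 powr (- h(\<eta>) m)\<close>.\<close>

lemma card_small_subsets_le_bin_entropy:
  fixes \<eta> :: real
  assumes "0 < \<eta>" "\<eta> \<le> 1/2"
  shows "real (card {S. S \<subseteq> {..<m} \<and> real (card S) \<le> \<eta> * real m})
           \<le> 2 powr (bin_entropy \<eta> * real m)"
proof -
  define Fam where "Fam = {S. S \<subseteq> {..<m} \<and> real (card S) \<le> \<eta> * real m}"
  define w where "w = 2 powr (- (bin_entropy \<eta> * real m))"
  have "real (card Fam) * w = (\<Sum>S\<in>Fam. w)" by simp
  also have "\<dots> \<le> (\<Sum>S\<in>Fam. \<eta> ^ card S * (1 - \<eta>) ^ (m - card S))"
    unfolding w_def Fam_def using assms
    by (intro sum_mono powr_neg_bin_entropy_le) (auto dest: card_mono[rotated])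
  also have "\<dots> \<le> (\<Sum>S\<in>Pow {..<m}. \<eta> ^ card S * (1 - \<eta>) ^ (m - card S))"
    using assms by (intro sum_mono2) (auto simp: Fam_def)
  finally have "real (card Fam) * w \<le> 1"
    by (simp only: sum_subsets_bernoulli_weights)
  then show ?thesis
    by (simp add: Fam_def w_def powr_minus field_simps)
qed

lemma cond_prob_eq_measure_cond_pmf:
  assumes "x \<in> set_pmf P" "x \<in> F"
  shows "cond_prob P E F = measure (cond_pmf P F) E"
proof -
  have F: "set_pmf P \<inter> F \<noteq> {}" using assms by auto
  show ?thesis
    unfolding cond_prob_def cond_pmf.rep_eq[OF F] using F
    by (subst measure_uniform_measure) (auto simp: emeasure_measure_pmf_not_zero Int_commute)
qed

lemma measure_pmf_le_if_cond_le:
  fixes P :: "'a pmf" and f :: "'a \<Rightarrow> 'b"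
  assumes "0 \<le> c"
    and "\<And>x. x \<in> set_pmf P \<Longrightarrow> measure (cond_pmf P {y. f y = f x}) E \<le> c"
  shows "measure P E \<le> c"
proof -
  have "P = bind_pmf (map_pmf f P) (\<lambda>v. cond_pmf P {y. f y = v})"
    by (rule bind_cond_pmf_cancel[symmetric]) (auto simp: measure_map_pmf vimage_def)
  then have "emeasure P E = (\<integral>\<^sup>+v. emeasure (cond_pmf P {y. f y = v}) E \<partial>map_pmf f P)"
    by (metis emeasure_bind_pmf)
  also have "\<dots> \<le> (\<integral>\<^sup>+v. ennreal c \<partial>map_pmf f P)"
    using assms(2) by (intro nn_integral_mono_AE)
      (auto simp: AE_measure_pmf_iff measure_pmf.emeasure_eq_measure intro!: ennreal_leI)
  finally show ?thesis
    using assms(1) by (simp add: measure_pmf.emeasure_eq_measure)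
qed

lemma measure_pmf_less_le_card:
  assumes "finite F" "set_pmf Q \<subseteq> F" "0 \<le> t"
  shows "measure Q {x. pmf Q x < t} \<le> real (card F) * t"
proof -
  have "measure Q {x. pmf Q x < t} \<le> measure Q ({x. pmf Q x < t} \<inter> F)"
    using assms(2) by (subst measure_Int_set_pmf[symmetric])
      (intro measure_pmf.finite_measure_mono, auto)
  also have "\<dots> = (\<Sum>x\<in>{x. pmf Q x < t} \<inter> F. pmf Q x)"
    using assms(1) by (simp add: measure_measure_pmf_finite)
  also have "\<dots> \<le> (\<Sum>x\<in>F. t)"
    using assms by (intro order.trans[OF sum_mono sum_mono2]) auto
  finally show ?thesis by simp
qed

lemma cond_prob_class_eq:
  assumes "y \<in> set_pmf (cond_pmf P {z. f z = f x})" "x \<in> set_pmf P"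
  shows "cond_prob P E {z. f z = f y} = measure (cond_pmf P {z. f z = f x}) E"
proof -
  have "set_pmf P \<inter> {z. f z = f x} \<noteq> {}" using assms(2) by auto
  then have "y \<in> set_pmf P" "f y = f x" using assms(1) by auto
  then show ?thesis by (simp add: cond_prob_eq_measure_cond_pmf)
qed

lemma measure_unlikely_outcome_le:
  fixes P :: "'a pmf" and f :: "'a \<Rightarrow> 'b" and g :: "'a \<Rightarrow> 'c"
  assumes "finite F" "g ` set_pmf P \<subseteq> F" "0 \<le> t"
  shows "measure P {x \<in> set_pmf P. cond_prob P {y. g y = g x} {y. f y = f x} < t}
           \<le> real (card F) * t"
proof (rule measure_pmf_le_if_cond_le[where f = f])
  fix x assume x: "x \<in> set_pmf P"
  define C where "C = cond_pmf P {y. f y = f x}"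
  define Q where "Q = map_pmf g C"
  have setC: "set_pmf C \<subseteq> set_pmf P"
    unfolding C_def using x by (subst set_cond_pmf) auto
  have pmf_Q: "cond_prob P {z. g z = g y} {z. f z = f y} = pmf Q (g y)" if "y \<in> set_pmf C" for y
    using cond_prob_class_eq[OF that[unfolded C_def] x]
    by (simp add: C_def Q_def pmf_map vimage_def)
  have "measure C {x \<in> set_pmf P. cond_prob P {y. g y = g x} {y. f y = f x} < t}
      \<le> measure C (g -` {v. pmf Q v < t})"
    by (subst measure_Int_set_pmf[symmetric], rule measure_pmf.finite_measure_mono)
      (auto simp: pmf_Q)
  also have "\<dots> = measure Q {v. pmf Q v < t}"
    by (simp add: Q_def)
  also have "\<dots> \<le> real (card F) * t"
    using assms setC by (intro measure_pmf_less_le_card) (auto simp: Q_def)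
  finally show "measure C {x \<in> set_pmf P. cond_prob P {y. g y = g x} {y. f y = f x} < t}
      \<le> real (card F) * t" .
qed (use assms(3) in simp)

lemma measure_unlikely_event_le:
  fixes P :: "'a pmf" and f :: "'a \<Rightarrow> 'b"
  assumes "0 \<le> \<delta>"
  shows "measure P {x \<in> set_pmf P. x \<in> E \<and> cond_prob P E {y. f y = f x} < \<delta>} \<le> \<delta>"
proof (rule measure_pmf_le_if_cond_le[where f = f, OF assms])
  fix x assume x: "x \<in> set_pmf P"
  define C where "C = cond_pmf P {y. f y = f x}"
  define U where "U = {x \<in> set_pmf P. x \<in> E \<and> cond_prob P E {y. f y = f x} < \<delta>}"
  show "measure C U \<le> \<delta>"
  proof (cases "measure C E < \<delta>")
    case True
    have "measure C U \<le> measure C E"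
      by (rule measure_pmf.finite_measure_mono) (auto simp: U_def)
    with True show ?thesis by simp
  next
    case False
    then have "U \<inter> set_pmf C = {}"
      using cond_prob_class_eq[OF _ x] by (fastforce simp: U_def C_def)
    then show ?thesis
      using assms measure_Int_set_pmf[of C U] by simp
  qed
qed

lemma prefix_event_eq_restrict: "prefix_event A i = {X. restrict X {..<i} = restrict A {..<i}}"
  unfolding prefix_event_def by (auto simp: restrict_def fun_eq_iff)

lemma rows_f2_mats_subset_indicators: "(\<lambda>X. X i) ` f2_mats m n \<subseteq> (\<lambda>S j. j \<in> S) ` Pow {..<n}"
proof
  fix r assume "r \<in> (\<lambda>X. X i) ` f2_mats m n"
  then have "r = (\<lambda>j. j \<in> {j. r j})" "{j. r j} \<in> Pow {..<n}"
    by (auto simp: f2_mats_def) (meson not_le)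
  then show "r \<in> (\<lambda>S j. j \<in> S) ` Pow {..<n}" by blast
qed

lemma measure_rare_le:
  assumes "set_pmf P \<subseteq> f2_mats m n"
  shows "measure P {A \<in> set_pmf P. rare P m n \<tau> A} \<le> real m * 2 powr (- \<tau> * real n)"
proof -
  define t :: real where "t = 2 powr (- (real n * (1 + \<tau>)))"
  define Rows where "Rows = (\<lambda>S j. j \<in> S) ` Pow {..<n}"
  have "card Rows \<le> 2 ^ n"
    unfolding Rows_def using card_image_le[of "Pow {..<n}" "\<lambda>S j. j \<in> S"] by (simp add: card_Pow)
  then have card_Rows: "real (card Rows) \<le> 2 ^ n"
    by (metis of_nat_le_iff of_nat_numeral of_nat_power)
  have "measure P {A \<in> set_pmf P. p_row P A i < t} \<le> 2 ^ n * t" for i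
  proof -
    have "(\<lambda>X. X i) ` set_pmf P \<subseteq> Rows"
      unfolding Rows_def using image_mono[OF assms] rows_f2_mats_subset_indicators by (rule order_trans)
    from measure_unlikely_outcome_le[where f = "\<lambda>X. restrict X {..<i}", OF _ this]
    have "measure P {A \<in> set_pmf P. p_row P A i < t} \<le> real (card Rows) * t"
      by (simp add: Rows_def t_def p_row_def prefix_event_eq_restrict)
    also have "\<dots> \<le> 2 ^ n * t"
      using card_Rows by (simp add: t_def)
    finally show ?thesis .
  qed
  then have "(\<Sum>i<m. measure P {A \<in> set_pmf P. p_row P A i < t}) \<le> (\<Sum>i<m. 2 ^ n * t)"
    by (intro sum_mono)
  moreover have "{A \<in> set_pmf P. rare P m n \<tau> A} = (\<Union>i<m. {A \<in> set_pmf P. p_row P A i < t})"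
    by (auto simp: rare_def t_def)
  then have "measure P {A \<in> set_pmf P. rare P m n \<tau> A}
      \<le> (\<Sum>i<m. measure P {A \<in> set_pmf P. p_row P A i < t})"
    by (simp add: measure_UNION_le)
  ultimately have "measure P {A \<in> set_pmf P. rare P m n \<tau> A} \<le> (\<Sum>i<m. 2 ^ n * t)"
    by linarith
  also have "(2::real) ^ n * t = 2 powr real n * 2 powr (- (real n * (1 + \<tau>)))"
    by (simp add: t_def powr_realpow)
  also have "\<dots> = 2 powr (real n + - (real n * (1 + \<tau>)))"
    by (simp only: powr_add)
  also have "\<dots> = 2 powr (- \<tau> * real n)"
    by (simp add: algebra_simps)
  finally show ?thesis by simp
qed

lemma measure_unlikely_B_value_le:
  assumes "valid_B P m n \<tau> \<eta> B" "0 \<le> \<delta>" "0 < \<eta>" "\<eta> \<le> 1/2"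
  shows "measure P {A \<in> set_pmf P. \<not> rare P m n \<tau> A \<and>
            (\<exists>i<m. cond_prob P {X. B X = B A} (prefix_event A i) < \<delta>)}
           \<le> real m * \<delta> * 2 powr (bin_entropy \<eta> * real m)"
proof -
  define Fam where "Fam = {S. S \<subseteq> {..<m} \<and> real (card S) \<le> \<eta> * real m}"
  define U where "U = (\<lambda>(i, S). {A \<in> set_pmf P. A \<in> {X. B X = Some S} \<and>
      cond_prob P {X. B X = Some S} {X. restrict X {..<i} = restrict A {..<i}} < \<delta>})"
  have "finite Fam"
    unfolding Fam_def by (rule finite_subset[of _ "Pow {..<m}"]) auto
  have "{A \<in> set_pmf P. \<not> rare P m n \<tau> A \<and>
            (\<exists>i<m. cond_prob P {X. B X = B A} (prefix_event A i) < \<delta>)}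
        \<subseteq> (\<Union>p\<in>{..<m} \<times> Fam. U p)"
    using assms(1) by (fastforce simp: valid_B_def U_def Fam_def prefix_event_eq_restrict)
  then have "measure P {A \<in> set_pmf P. \<not> rare P m n \<tau> A \<and>
            (\<exists>i<m. cond_prob P {X. B X = B A} (prefix_event A i) < \<delta>)}
        \<le> measure P (\<Union>p\<in>{..<m} \<times> Fam. U p)"
    by (rule measure_pmf.finite_measure_mono) simp
  also have "\<dots> \<le> (\<Sum>p\<in>{..<m} \<times> Fam. measure P (U p))"
    using \<open>finite Fam\<close> by (intro measure_UNION_le) auto
  also have "\<dots> \<le> (\<Sum>p\<in>{..<m} \<times> Fam. \<delta>)"
  proof (intro sum_mono)
    fix p :: "nat \<times> nat set"
    obtain i S where p: "p = (i, S)" by (cases p)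
    show "measure P (U p) \<le> \<delta>"
      using measure_unlikely_event_le[OF assms(2), of P "{X. B X = Some S}"
          "\<lambda>X. restrict X {..<i}"]
      by (simp add: U_def p)
  qed
  also have "\<dots> = real m * \<delta> * real (card Fam)"
    by (simp add: card_cartesian_product)
  also have "\<dots> \<le> real m * \<delta> * 2 powr (bin_entropy \<eta> * real m)"
    unfolding Fam_def using assms(2-4)
    by (intro mult_left_mono card_small_subsets_le_bin_entropy) auto
  finally show ?thesis .
qed

theorem lemmaG7:
  fixes m n :: nat and \<gamma> \<tau> \<delta> \<eta> :: real
    and P :: "mat2 pmf" and B :: "mat2 \<Rightarrow> nat set option"
  assumes "0 < m" and "m \<le> n"
    and "\<gamma> > 0" and "\<tau> > 0" and "\<delta> > 0"
    and "\<eta> = sqrt (\<tau> + \<gamma>)" and "\<eta> < 1/2"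
    and "set_pmf P \<subseteq> f2_mats m n"
    and "min_entropy P \<ge> (1 - \<gamma>) * real m * real n"
    and "valid_B P m n \<tau> \<eta> B"
  shows "measure_pmf.prob P {A \<in> set_pmf P. bad P m n \<tau> \<delta> B A}
           \<le> real m * 2 powr (- \<tau> * real n) + real m * \<delta> * 2 powr (bin_entropy \<eta> * real m)"
proof -
  have "0 < \<eta>" using assms(3,4,6) by simp
  have "{A \<in> set_pmf P. bad P m n \<tau> \<delta> B A}
      = {A \<in> set_pmf P. rare P m n \<tau> A} \<union>
        {A \<in> set_pmf P. \<not> rare P m n \<tau> A \<and>
           (\<exists>i<m. cond_prob P {X. B X = B A} (prefix_event A i) < \<delta>)}"
    by (auto simp: bad_def)
  then have "measure P {A \<in> set_pmf P. bad P m n \<tau> \<delta> B A}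
      \<le> measure P {A \<in> set_pmf P. rare P m n \<tau> A} +
        measure P {A \<in> set_pmf P. \<not> rare P m n \<tau> A \<and>
           (\<exists>i<m. cond_prob P {X. B X = B A} (prefix_event A i) < \<delta>)}"
    by (simp add: measure_Un_le)
  also have "\<dots> \<le> real m * 2 powr (- \<tau> * real n) + real m * \<delta> * 2 powr (bin_entropy \<eta> * real m)"
    using measure_rare_le[OF assms(8)] measure_unlikely_B_value_le[OF assms(10)] assms(5,7) \<open>0 < \<eta>\<close>
    by (intro add_mono) auto
  finally show ?thesis .
qed

end
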